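(* If a stationary renewal process is a finitary factor of an i.i.d.\ process, then its jump distribution is non-lattice and has exponential tails.
   Context: A (discrete) renewal process is a $\{0,1\}$-valued process $X=(X_n)_{n\in\mathbb Z}$ with infinitely many 1's in both directions such that the distances between consecutive 1's are i.i.d.; their common law, a distribution $T$ on the positive integers, is the jump distribution. $T$ is non-lattice if $\gcd\{t:\mathbb P(T=t)>0\}=1$, and has exponential tails if there are $C,c>0$ with $\mathbb P(T\ge t)\le Ce^{-ct}$ for all $t\ge1$. A process $X$ is a factor of $Y=(Y_n)_{n\in\mathbb Z}$ if $X_n=\varphi(\dots,Y_{n-1},Y_n,Y_{n+1},\dots)$ for a measurable, shift-equivariant $\varphi$; it is finitary if there is an almost surely finite stopping time $R$ for the filtration $\mathcal F_r=\sigma(Y_n:|n|\le r)$ such that $X_0$ is $\mathcal F_R$-measurable. *)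

theory Defs
  imports "HOL-Probability.Probability"
begin

text \<open>The i.i.d. process: coordinate process on the product space S^Z with
  product measure (every coordinate has law mu).\<close>

definition iid_space :: "'a measure \<Rightarrow> (int \<Rightarrow> 'a) measure" where
  "iid_space \<mu> = PiM UNIV (\<lambda>_::int. \<mu>)"

definition factor_proc :: "((int \<Rightarrow> 'a) \<Rightarrow> bool) \<Rightarrow> int \<Rightarrow> (int \<Rightarrow> 'a) \<Rightarrow> bool" where
  "factor_proc \<phi> n y = \<phi> (\<lambda>k. y (n + k))"

definition window_filtration :: "'a measure \<Rightarrow> enat \<Rightarrow> (int \<Rightarrow> 'a) measure" where
  "window_filtration \<mu> r =
     sigma (space (iid_space \<mu>))
       {{y \<in> space (iid_space \<mu>). y n \<in> A} | n A. enat (nat \<bar>n\<bar>) \<le> r \<and> A \<in> sets \<mu>}"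

definition finitary_factor :: "'a measure \<Rightarrow> ((int \<Rightarrow> 'a) \<Rightarrow> bool) \<Rightarrow> bool" where
  "finitary_factor \<mu> \<phi> \<longleftrightarrow>
     \<phi> \<in> measurable (iid_space \<mu>) (count_space UNIV) \<and>
     (\<exists>R. stopping_time (window_filtration \<mu>) R \<and>
          (AE y in iid_space \<mu>. R y \<noteq> \<infinity>) \<and>
          \<phi> \<in> measurable (filtration.pre_sigma (space (iid_space \<mu>)) (window_filtration \<mu>) R)
                        (count_space UNIV))"

definition non_lattice :: "nat pmf \<Rightarrow> bool" where
  "non_lattice T \<longleftrightarrow> Gcd {t. pmf T t > 0} = 1"

definition exponential_tails :: "nat pmf \<Rightarrow> bool" where
  "exponential_tails T \<longleftrightarrow>
     (\<exists>C c. C > 0 \<and> c > 0 \<and> (\<forall>t\<ge>1. measure_pmf.prob T {t..} \<le> C * exp (- c * real t)))"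

text \<open>Stationary renewal process (with values True = 1, False = 0) on a probability space M
  with jump distribution T:
  stationary, a.s. infinitely many 1's in both directions, and, given X_0 = 1, the successive
  distances t_1, ..., t_k between consecutive 1's after time 0 are i.i.d. with law T
  (by stationarity this is equivalent to the two-sided i.i.d. gap structure of the Palm version).\<close>

definition ones_pattern :: "nat list \<Rightarrow> int set" where
  "ones_pattern ts = {int (sum_list (take j ts)) | j. 1 \<le> j \<and> j \<le> length ts}"

definition stationary_renewal :: "'w measure \<Rightarrow> (int \<Rightarrow> 'w \<Rightarrow> bool) \<Rightarrow> nat pmf \<Rightarrow> bool" where
  "stationary_renewal M X T \<longleftrightarrow>
     prob_space M \<and>
     (\<forall>n. X n \<in> measurable M (count_space UNIV)) \<and>
     (\<forall>k. distr M (PiM UNIV (\<lambda>_::int. count_space UNIV)) (\<lambda>w n. X (n + k) w)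
          = distr M (PiM UNIV (\<lambda>_::int. count_space UNIV)) (\<lambda>w n. X n w)) \<and>
     (AE w in M. infinite {n. n \<ge> 0 \<and> X n w} \<and> infinite {n. n \<le> 0 \<and> X n w}) \<and>
     pmf T 0 = 0 \<and>
     (\<forall>ts. (\<forall>t\<in>set ts. t > 0) \<longrightarrow>
        measure M {w \<in> space M. X 0 w \<and>
            (\<forall>m\<in>{1..int (sum_list ts)}. X m w \<longleftrightarrow> m \<in> ones_pattern ts)}
        = measure M {w \<in> space M. X 0 w} * (\<Prod>t\<leftarrow>ts. pmf T t))"

end

theory Submission
  imports Defs
begin

text \<open>Let \<open>R\<close> be the coding radius. Call a renewal at \<open>n\<close> decided within \<open>r\<close> if \<open>X\<^sub>n = 1\<close>
  and the coding radius of the input shifted to \<open>n\<close> is at most \<open>r\<close>. This event depends only on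
  the coordinates in \<open>[n - r, n + r]\<close>, so such events are independent for disjoint windows, and
  for large \<open>r\<close> they carry almost all of the probability of \<open>X\<^sub>n = 1\<close>.

  Non-lattice: if \<open>T\<close> lived on \<open>d\<nat>\<close> with \<open>d \<ge> 2\<close>, a renewal argument would give
  \<open>P(X\<^sub>0 = X\<^sub>n = 1) = 0\<close> for all \<open>n\<close> not divisible by \<open>d\<close>; but for \<open>n = 2rd + 1\<close> the decided
  renewals at \<open>0\<close> and \<open>n\<close> are independent events of the same positive probability.

  Exponential tails: choosing first \<open>L\<close> and then \<open>r\<close> large, a block of \<open>L\<close> sites contains no
  decided renewal with probability at most \<open>1/2\<close>. A gap of length \<open>t\<close> contains about
  \<open>t / (L + 2r)\<close> blocks with disjoint windows, so its probability decays exponentially in \<open>t\<close>,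
  and after a renewal at \<open>0\<close> the event \<open>T \<ge> t\<close> forces such a gap.\<close>

definition shift_seq :: "int \<Rightarrow> (int \<Rightarrow> 'a) \<Rightarrow> int \<Rightarrow> 'a" where
  "shift_seq n y = (\<lambda>k. y (n + k))"

definition coord_sigma :: "'a measure \<Rightarrow> int set \<Rightarrow> (int \<Rightarrow> 'a) measure" where
  "coord_sigma \<mu> I = sigma (space (iid_space \<mu>))
       {{y \<in> space (iid_space \<mu>). y n \<in> A} | n A. n \<in> I \<and> A \<in> sets \<mu>}"

lemma shift_seq_0 [simp]: "shift_seq 0 y = y"
  by (simp add: shift_seq_def)

lemma factor_proc_eq_shift_seq: "factor_proc \<phi> n y = \<phi> (shift_seq n y)"
  by (simp add: factor_proc_def shift_seq_def)

lemma factor_proc_add: "factor_proc \<phi> (i + k) y = factor_proc \<phi> i (shift_seq k y)"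
  by (simp add: factor_proc_def shift_seq_def algebra_simps)

lemma space_iid_space: "space (iid_space \<mu>) = UNIV \<rightarrow> space \<mu>"
  by (simp add: iid_space_def space_PiM PiE_def)

lemma prob_space_iid_space: "prob_space \<mu> \<Longrightarrow> prob_space (iid_space \<mu>)"
  unfolding iid_space_def by (rule prob_space_PiM) auto

lemma coord_generators_Pow:
  "{{y \<in> space (iid_space \<mu>). y n \<in> A} | n A. n \<in> I \<and> A \<in> sets \<mu>} \<subseteq> Pow (space (iid_space \<mu>))"
  by auto

lemma sets_coord_sigma: "sets (coord_sigma \<mu> I) = sigma_sets (space (iid_space \<mu>))
       {{y \<in> space (iid_space \<mu>). y n \<in> A} | n A. n \<in> I \<and> A \<in> sets \<mu>}"
  unfolding coord_sigma_def by (rule sets_measure_of[OF coord_generators_Pow])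

lemma space_coord_sigma: "space (coord_sigma \<mu> I) = space (iid_space \<mu>)"
  unfolding coord_sigma_def by (rule space_measure_of[OF coord_generators_Pow])

lemma coord_sigma_mono: "I \<subseteq> J \<Longrightarrow> sets (coord_sigma \<mu> I) \<subseteq> sets (coord_sigma \<mu> J)"
  unfolding sets_coord_sigma by (rule sigma_sets_mono') auto

lemma sets_coord_sigma_subset: "sets (coord_sigma \<mu> I) \<subseteq> sets (iid_space \<mu>)"
  unfolding sets_coord_sigma
proof (rule sets.sigma_sets_subset, safe)
  fix n A assume "A \<in> sets \<mu>"
  then show "{y \<in> space (iid_space \<mu>). y n \<in> A} \<in> sets (iid_space \<mu>)"
    unfolding iid_space_def by measurable
qed

lemma window_filtration_eq_coord_sigma:
  "window_filtration \<mu> (enat r) = coord_sigma \<mu> {- int r .. int r}"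
proof -
  have "\<And>n::int. enat (nat \<bar>n\<bar>) \<le> enat r \<longleftrightarrow> n \<in> {- int r .. int r}" by auto
  then show ?thesis unfolding window_filtration_def coord_sigma_def by simp
qed

lemma space_window_filtration: "space (window_filtration \<mu> r) = space (iid_space \<mu>)"
  unfolding window_filtration_def by (rule space_measure_of) auto

lemma sets_window_filtration_mono:
  "r \<le> s \<Longrightarrow> sets (window_filtration \<mu> r) \<subseteq> sets (window_filtration \<mu> s)"
  unfolding window_filtration_def
  by (subst sets_measure_of, fastforce)+ (rule sigma_sets_mono', use order_trans in fastforce)

lemma shift_seq_in_space: "y \<in> space (iid_space \<mu>) \<Longrightarrow> shift_seq n y \<in> space (iid_space \<mu>)"
  by (auto simp: space_iid_space shift_seq_def)

lemma measurable_shift_seq_coord_sigma: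
  "shift_seq k \<in> measurable (coord_sigma \<mu> ((+) k ` I)) (coord_sigma \<mu> I)"
  unfolding coord_sigma_def[of _ I]
proof (rule measurable_measure_of)
  show "{{y \<in> space (iid_space \<mu>). y n \<in> A} | n A. n \<in> I \<and> A \<in> sets \<mu>}
      \<subseteq> Pow (space (iid_space \<mu>))"
    by (rule coord_generators_Pow)
  show "shift_seq k \<in> space (coord_sigma \<mu> ((+) k ` I)) \<rightarrow> space (iid_space \<mu>)"
    by (auto simp: space_coord_sigma shift_seq_in_space)
  fix Y assume "Y \<in> {{y \<in> space (iid_space \<mu>). y n \<in> A} | n A. n \<in> I \<and> A \<in> sets \<mu>}"
  then obtain n A where Y: "Y = {y \<in> space (iid_space \<mu>). y n \<in> A}" "n \<in> I" "A \<in> sets \<mu>"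
    by auto
  have "shift_seq k -` Y \<inter> space (coord_sigma \<mu> ((+) k ` I))
      = {y \<in> space (iid_space \<mu>). y (k + n) \<in> A}"
    using Y by (auto simp: space_coord_sigma space_iid_space shift_seq_def)
  also have "\<dots> \<in> sets (coord_sigma \<mu> ((+) k ` I))"
    unfolding sets_coord_sigma using Y by (intro sigma_sets.Basic) blast
  finally show "shift_seq k -` Y \<inter> space (coord_sigma \<mu> ((+) k ` I))
      \<in> sets (coord_sigma \<mu> ((+) k ` I))" .
qed

lemma shift_seq_vimage_coord_sigma:
  assumes "A \<in> sets (coord_sigma \<mu> I)"
  shows "shift_seq k -` A \<inter> space (iid_space \<mu>) \<in> sets (coord_sigma \<mu> ((+) k ` I))"
  using measurable_sets[OF measurable_shift_seq_coord_sigma assms] by (simp add: space_coord_sigma)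

lemma measurable_shift_seq: "shift_seq k \<in> measurable (iid_space \<mu>) (iid_space \<mu>)"
  unfolding iid_space_def shift_seq_def
  by (rule measurable_PiM_single') (auto simp: space_PiM)

lemma distr_shift_seq_iid_space:
  assumes "prob_space \<mu>"
  shows "distr (iid_space \<mu>) (iid_space \<mu>) (shift_seq k) = iid_space \<mu>"
proof -
  have "(\<lambda>\<omega>. \<lambda>n\<in>UNIV. \<omega> (k + n)) = shift_seq k"
    by (auto simp: shift_seq_def restrict_def)
  moreover have "distr (Pi\<^sub>M UNIV (\<lambda>_::int. \<mu>)) (\<Pi>\<^sub>M i\<in>UNIV. \<mu>) (\<lambda>\<omega>. \<lambda>n\<in>UNIV. \<omega> (k + n))
      = (\<Pi>\<^sub>M i\<in>UNIV. \<mu>)"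
    using distr_PiM_reindex[of UNIV "\<lambda>_. \<mu>" "(+) k" UNIV] by (auto simp: assms)
  ultimately show ?thesis unfolding iid_space_def by metis
qed

lemma measure_shift_seq_vimage:
  assumes "prob_space \<mu>" "A \<in> sets (iid_space \<mu>)"
  shows "measure (iid_space \<mu>) (shift_seq k -` A \<inter> space (iid_space \<mu>)) = measure (iid_space \<mu>) A"
  using measure_distr[OF measurable_shift_seq assms(2), of k]
  by (simp add: distr_shift_seq_iid_space[OF assms(1)])

lemma indep_vars_coordinates:
  assumes "prob_space \<mu>"
  shows "prob_space.indep_vars (iid_space \<mu>) (\<lambda>_. \<mu>) (\<lambda>i y. y i) UNIV"
proof -
  interpret P: prob_space "iid_space \<mu>" by (rule prob_space_iid_space[OF assms])
  have component: "\<And>i. distr (iid_space \<mu>) \<mu> (\<lambda>y. y i) = \<mu>"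
    unfolding iid_space_def by (rule distr_PiM_component) (auto simp: assms)
  have "(\<lambda>x. \<lambda>i\<in>UNIV. x i) = (\<lambda>x::int \<Rightarrow> 'a. x)" by (auto simp: restrict_def)
  then have "distr (iid_space \<mu>) (\<Pi>\<^sub>M i\<in>UNIV. \<mu>) (\<lambda>x. \<lambda>i\<in>UNIV. x i)
      = (\<Pi>\<^sub>M i\<in>UNIV. distr (iid_space \<mu>) \<mu> (\<lambda>y. y i))"
    unfolding component by (simp add: iid_space_def distr_id2)
  then show ?thesis
    by (subst P.indep_vars_iff_distr_eq_PiM) (auto simp: iid_space_def)
qed

lemma measure_coord_sigma_Int:
  assumes \<mu>: "prob_space \<mu>"
    and A: "A \<in> sets (coord_sigma \<mu> I)" and B: "B \<in> sets (coord_sigma \<mu> J)"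
    and disjoint: "I \<inter> J = {}"
  shows "measure (iid_space \<mu>) (A \<inter> B) = measure (iid_space \<mu>) A * measure (iid_space \<mu>) B"
proof -
  interpret P: prob_space "iid_space \<mu>" by (rule prob_space_iid_space[OF \<mu>])
  let ?E = "\<lambda>i. {(\<lambda>y. y i) -` C \<inter> space (iid_space \<mu>) | C. C \<in> sets \<mu>}"
  let ?K = "case_bool I J"
  have "P.indep_sets ?E UNIV"
    using indep_vars_coordinates[OF \<mu>] unfolding P.indep_vars_def2 by auto
  then have "P.indep_sets (\<lambda>j. sigma_sets (space (iid_space \<mu>)) (\<Union>i\<in>?K j. ?E i)) UNIV"
  proof (intro P.indep_sets_collect_sigma)
    show "Int_stable (?E i)" for i
      unfolding Int_stable_def by safe (rule_tac x="C \<inter> Ca" in exI, auto)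
    show "disjoint_family_on ?K UNIV"
      using disjoint by (auto simp: disjoint_family_on_def split: bool.split)
  qed (auto intro: P.indep_sets_mono_index)
  moreover have "\<And>K. (\<Union>i\<in>K. ?E i)
      = {{y \<in> space (iid_space \<mu>). y n \<in> A} | n A. n \<in> K \<and> A \<in> sets \<mu>}"
    by blast
  ultimately have "P.indep_sets (\<lambda>j. sets (coord_sigma \<mu> (?K j))) UNIV"
    unfolding sets_coord_sigma by simp
  then have "P.prob (\<Inter>j. case_bool A B j) = (\<Prod>j\<in>UNIV. P.prob (case_bool A B j))"
    by (rule P.indep_setsD) (use A B in \<open>auto split: bool.split\<close>)
  then show ?thesis by (simp add: UNIV_bool Int_commute)
qed

lemma measure_pmf_atLeast_le:
  fixes p :: "nat pmf"
  assumes "\<And>N. measure_pmf.prob p {t..N} \<le> B"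
  shows "measure_pmf.prob p {t..} \<le> B"
proof -
  have "(\<lambda>N. measure_pmf.prob p {t..N}) \<longlonglongrightarrow> measure_pmf.prob p (\<Union>N. {t..N})"
    by (rule measure_pmf.finite_Lim_measure_incseq) (auto simp: incseq_def)
  moreover have "(\<Union>N. {t..N}) = {t..}" by auto
  ultimately show ?thesis using assms by (intro LIMSEQ_le_const2) auto
qed

lemma half_power_div_le_exp:
  assumes "K > 0" "t \<ge> 1"
  shows "(1/2::real) ^ ((t - 1) div K) \<le> 2 * exp (- (ln 2 / real K) * real t)"
proof -
  define m where "m = (t - 1) div K"
  have "t - 1 = m * K + (t - 1) mod K" unfolding m_def by simp
  moreover have "(t - 1) mod K < K" using assms(1) by simp
  ultimately have "t - 1 < m * K + K" by linarith
  then have "real t / real K \<le> real m + 1"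
    using assms by (simp add: field_simps flip: of_nat_mult of_nat_add of_nat_Suc)
  then have "exp (- (ln 2 / real K) * real t) \<ge> exp (- (ln 2 * (real m + 1)))"
    using mult_left_mono[of "real t / real K" "real m + 1" "ln 2"] by simp
  moreover have "exp (ln 2 * (real m + 1)) = 2 ^ Suc m"
    using exp_of_nat_mult[of "Suc m" "ln (2::real)"] by (simp add: mult.commute add.commute)
  then have "(1/2::real) ^ m = 2 * exp (- (ln 2 * (real m + 1)))"
    by (simp add: exp_minus power_one_over inverse_eq_divide)
  ultimately show ?thesis unfolding m_def by linarith
qed

locale finitary_renewal =
  fixes \<mu> :: "'a measure" and \<phi> :: "(int \<Rightarrow> 'a) \<Rightarrow> bool" and T :: "nat pmf"
    and R :: "(int \<Rightarrow> 'a) \<Rightarrow> enat"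
  assumes prob_space_\<mu>: "prob_space \<mu>"
    and renewal: "stationary_renewal (iid_space \<mu>) (factor_proc \<phi>) T"
    and stopping_time_R: "stopping_time (window_filtration \<mu>) R"
    and R_finite: "AE y in iid_space \<mu>. R y \<noteq> \<infinity>"
    and \<phi>_measurable_pre_sigma:
      "\<phi> \<in> measurable (filtration.pre_sigma (space (iid_space \<mu>)) (window_filtration \<mu>) R)
                    (count_space UNIV)"
begin

abbreviation "M \<equiv> iid_space \<mu>"
abbreviation "\<Omega> \<equiv> space (iid_space \<mu>)"
abbreviation "X \<equiv> factor_proc \<phi>"

sublocale prob_space M
  by (rule prob_space_iid_space[OF prob_space_\<mu>])

sublocale window: filtration \<Omega> "window_filtration \<mu>"
  by unfold_locales (auto simp: space_window_filtration sets_window_filtration_mono)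

lemma measurable_X[measurable]: "X n \<in> measurable M (count_space UNIV)"
  using renewal unfolding stationary_renewal_def by blast

lemma pmf_T_0: "pmf T 0 = 0"
  using renewal unfolding stationary_renewal_def by blast

lemma AE_infinitely_many_ones: "AE y in M. infinite {n. n \<ge> 0 \<and> X n y}"
  using renewal unfolding stationary_renewal_def by auto

lemma prob_shift_invariant:
  assumes "{y \<in> \<Omega>. Q (\<lambda>i. X i y)} \<in> sets M"
  shows "prob {y \<in> \<Omega>. Q (\<lambda>i. X (i + k) y)} = prob {y \<in> \<Omega>. Q (\<lambda>i. X i y)}"
proof -
  have "{y \<in> \<Omega>. Q (\<lambda>i. X (i + k) y)} = shift_seq k -` {y \<in> \<Omega>. Q (\<lambda>i. X i y)} \<inter> \<Omega>"
    by (auto simp: factor_proc_add shift_seq_in_space)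
  then show ?thesis using measure_shift_seq_vimage[OF prob_space_\<mu> assms] by simp
qed

lemma sets_R_le: "{y \<in> \<Omega>. R y \<le> enat r} \<in> sets M"
proof -
  have "{y \<in> \<Omega>. R y \<le> enat r} \<in> sets (window_filtration \<mu> (enat r))"
    using stopping_timeD[OF stopping_time_R, of "enat r"]
    by (simp add: Measurable.pred_def space_window_filtration)
  then show ?thesis
    using sets_coord_sigma_subset by (auto simp: window_filtration_eq_coord_sigma)
qed

lemma prob_R_le_tendsto:
  assumes "A \<in> sets M"
  shows "(\<lambda>r. prob {y \<in> A. R y \<le> enat r}) \<longlonglongrightarrow> prob A"
proof -
  have "{y \<in> A. R y \<le> enat r} = A \<inter> {y \<in> \<Omega>. R y \<le> enat r}" for r
    using sets.sets_into_space[OF assms] by auto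
  then have sets: "range (\<lambda>r. {y \<in> A. R y \<le> enat r}) \<subseteq> sets M"
    using assms sets_R_le by auto
  have "(\<lambda>r. prob {y \<in> A. R y \<le> enat r}) \<longlonglongrightarrow> prob (\<Union>r. {y \<in> A. R y \<le> enat r})"
    using sets by (rule finite_Lim_measure_incseq) (auto simp: incseq_def intro: order_trans)
  moreover have "prob (\<Union>r. {y \<in> A. R y \<le> enat r}) = prob A"
  proof (rule finite_measure_eq_AE)
    show "AE y in M. y \<in> (\<Union>r. {y \<in> A. R y \<le> enat r}) \<longleftrightarrow> y \<in> A"
      using R_finite by eventually_elim auto
  qed (use sets assms in auto)
  ultimately show ?thesis by simp
qed

definition decided_renewal :: "nat \<Rightarrow> int \<Rightarrow> (int \<Rightarrow> 'a) set" where
  "decided_renewal r n = {y \<in> \<Omega>. X n y \<and> R (shift_seq n y) \<le> enat r}"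

lemma decided_renewal_eq_shift_seq_vimage:
  "decided_renewal r n = shift_seq n -` decided_renewal r 0 \<inter> \<Omega>"
  by (auto simp: decided_renewal_def factor_proc_eq_shift_seq shift_seq_in_space)

lemma decided_renewal_0_in_coord_sigma:
  "decided_renewal r 0 \<in> sets (coord_sigma \<mu> {- int r .. int r})"
proof -
  have "\<phi> -` {True} \<inter> space (window.pre_sigma R) \<in> sets (window.pre_sigma R)"
    using \<phi>_measurable_pre_sigma by (rule measurable_sets) simp
  then have "{y \<in> \<phi> -` {True} \<inter> \<Omega>. R y \<le> enat r} \<in> sets (window_filtration \<mu> (enat r))"
    using window.sets_pre_sigma[OF stopping_time_R] window.space_pre_sigma by auto
  moreover have "{y \<in> \<phi> -` {True} \<inter> \<Omega>. R y \<le> enat r} = decided_renewal r 0"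
    by (auto simp: decided_renewal_def factor_proc_def)
  ultimately show ?thesis by (simp add: window_filtration_eq_coord_sigma)
qed

lemma decided_renewal_in_coord_sigma:
  "decided_renewal r n \<in> sets (coord_sigma \<mu> {n - int r .. n + int r})"
proof -
  have "(+) n ` {- int r .. int r} = {n - int r .. n + int r}"
    by (auto simp: image_iff intro!: exI[of _ "x - n" for x])
  then show ?thesis
    using shift_seq_vimage_coord_sigma[OF decided_renewal_0_in_coord_sigma, of n]
    by (simp add: decided_renewal_eq_shift_seq_vimage[of r n] add.commute)
qed

lemma sets_decided_renewal[measurable]: "decided_renewal r n \<in> sets M"
  using decided_renewal_in_coord_sigma sets_coord_sigma_subset by blast

lemma prob_decided_renewal: "prob (decided_renewal r n) = prob (decided_renewal r 0)"
  unfolding decided_renewal_eq_shift_seq_vimage[of r n]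
  by (rule measure_shift_seq_vimage[OF prob_space_\<mu> sets_decided_renewal])

definition intensity :: real where
  "intensity = prob {y \<in> \<Omega>. X 0 y}"

lemma intensity_pos: "intensity > 0"
proof (rule ccontr)
  assume "\<not> intensity > 0"
  then have "prob {y \<in> \<Omega>. X 0 y} = 0"
    unfolding intensity_def using measure_nonneg[of M] by (meson not_le order_antisym)
  then have "prob {y \<in> \<Omega>. X n y} = 0" for n
    using prob_shift_invariant[of "\<lambda>f. f 0" n] by simp
  then have "AE y in M. \<not> X n y" for n
    by (intro AE_I'[of "{y \<in> \<Omega>. X n y}"]) (auto simp: emeasure_eq_measure)
  then have "AE y in M. \<forall>n. \<not> X n y" by (simp add: AE_all_countable)
  with AE_infinitely_many_ones have "AE y in M. False"
    by eventually_elim auto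
  then show False by simp
qed

lemma ex_prob_decided_renewal_pos: "\<exists>r. prob (decided_renewal r 0) > 0"
proof -
  have "(\<lambda>r. prob {y \<in> {y \<in> \<Omega>. X 0 y}. R y \<le> enat r}) \<longlonglongrightarrow> intensity"
    unfolding intensity_def by (rule prob_R_le_tendsto) measurable
  then have "eventually (\<lambda>r. prob {y \<in> {y \<in> \<Omega>. X 0 y}. R y \<le> enat r} > 0) sequentially"
    using intensity_pos by (rule order_tendstoD)
  then show ?thesis
    by (auto simp: eventually_sequentially decided_renewal_def shift_seq_def)
qed

definition first_return :: "nat \<Rightarrow> (int \<Rightarrow> 'a) set" where
  "first_return s = {y \<in> \<Omega>. X 0 y \<and> (\<forall>m\<in>{1..int s}. X m y \<longleftrightarrow> m = int s)}"

lemma sets_first_return[measurable]: "first_return s \<in> sets M"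
  unfolding first_return_def by measurable

lemma prob_first_return:
  assumes "s > 0"
  shows "prob (first_return s) = intensity * pmf T s"
proof -
  have "ones_pattern [s] = {int s}"
    unfolding ones_pattern_def by (auto intro!: exI[of _ 1])
  then show ?thesis
    using renewal assms unfolding stationary_renewal_def
    by (auto dest!: spec[of _ "[s]"] simp: first_return_def intensity_def)
qed

lemma disjoint_family_on_first_return: "disjoint_family_on first_return {1..}"
  unfolding disjoint_family_on_def
proof (intro ballI impI)
  fix s s' :: nat assume "s \<in> {1..}" "s' \<in> {1..}" "s \<noteq> s'"
  then show "first_return s \<inter> first_return s' = {}"
    unfolding first_return_def by (cases "s < s'") force+
qed

lemma renewal_pair_subset_first_return:
  assumes "n \<ge> 1"
  shows "{y \<in> \<Omega>. X 0 y \<and> X (int n) y} \<subseteq> (\<Union>s\<in>{1..n}. first_return s \<inter> {y \<in> \<Omega>. X (int n) y})"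
proof
  fix y assume y: "y \<in> {y \<in> \<Omega>. X 0 y \<and> X (int n) y}"
  define s where "s = (LEAST s. 1 \<le> s \<and> X (int s) y)"
  have "1 \<le> n \<and> X (int n) y" using y assms by auto
  then have s: "1 \<le> s" "X (int s) y" "s \<le> n"
    using LeastI[of "\<lambda>s. 1 \<le> s \<and> X (int s) y" n] Least_le[of _ n] unfolding s_def by auto
  have "X m y \<longleftrightarrow> m = int s" if "m \<in> {1..int s}" for m
    using that s Least_le[of "\<lambda>s. 1 \<le> s \<and> X (int s) y" "nat m"] unfolding s_def by force
  then show "y \<in> (\<Union>s\<in>{1..n}. first_return s \<inter> {y \<in> \<Omega>. X (int n) y})"
    using y s by (auto simp: first_return_def intro!: bexI[of _ s])
qed

text \<open>Renewal argument: if \<open>T\<close> lives on \<open>d\<nat>\<close>, split \<open>X\<^sub>0 = X\<^sub>n = 1\<close> according to the first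
  renewal \<open>s\<close> after \<open>0\<close>; either \<open>pmf T s = 0\<close>, or \<open>d\<close> divides \<open>s\<close> but not \<open>n - s\<close> and
  stationarity reduces to the shorter distance \<open>n - s\<close>.\<close>

lemma prob_renewal_pair_lattice:
  assumes lattice: "\<And>t. \<not> d dvd t \<Longrightarrow> pmf T t = 0"
  shows "n \<ge> 1 \<Longrightarrow> \<not> d dvd n \<Longrightarrow> prob {y \<in> \<Omega>. X 0 y \<and> X (int n) y} = 0"
proof (induction n rule: less_induct)
  case (less n)
  have "prob (first_return s \<inter> {y \<in> \<Omega>. X (int n) y}) = 0" if s: "s \<in> {1..n}" for s
  proof (cases "d dvd s")
    case False
    have "prob (first_return s \<inter> {y \<in> \<Omega>. X (int n) y}) \<le> prob (first_return s)"
      by (intro finite_measure_mono) auto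
    also have "\<dots> = 0" using s lattice[OF False] by (simp add: prob_first_return)
    finally show ?thesis by (simp add: measure_le_0_iff)
  next
    case True
    with s less.prems have "s < n" "\<not> d dvd (n - s)"
      by (auto simp: dvd_diff_nat le_less) (metis dvd_add_left_iff le_add_diff_inverse2 less_imp_le)
    then have "prob (first_return s \<inter> {y \<in> \<Omega>. X (int n) y})
        \<le> prob {y \<in> \<Omega>. X (0 + int s) y \<and> X (int (n - s) + int s) y}"
      using s by (intro finite_measure_mono) (auto simp: first_return_def of_nat_diff)
    also have "\<dots> = prob {y \<in> \<Omega>. X 0 y \<and> X (int (n - s)) y}"
      by (rule prob_shift_invariant[of "\<lambda>f. f 0 \<and> f (int (n - s))"]) measurable
    also have "\<dots> = 0" using \<open>s < n\<close> \<open>\<not> d dvd (n - s)\<close> s by (intro less.IH) auto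
    finally show ?thesis by (simp add: measure_le_0_iff)
  qed
  then have "(\<Sum>s\<in>{1..n}. prob (first_return s \<inter> {y \<in> \<Omega>. X (int n) y})) = 0" by simp
  moreover have "prob {y \<in> \<Omega>. X 0 y \<and> X (int n) y}
      \<le> (\<Sum>s\<in>{1..n}. prob (first_return s \<inter> {y \<in> \<Omega>. X (int n) y}))"
    using renewal_pair_subset_first_return[OF less.prems(1)]
    by (intro order_trans[OF finite_measure_mono measure_UNION_le]) auto
  ultimately show ?case by (simp add: measure_le_0_iff)
qed

lemma non_lattice_T: "non_lattice T"
  unfolding non_lattice_def
proof (rule ccontr)
  define d where "d = Gcd {t. pmf T t > 0}"
  assume "Gcd {t. 0 < pmf T t} \<noteq> 1"
  then have "d \<noteq> 1" unfolding d_def by simp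
  have lattice: "pmf T t = 0" if "\<not> d dvd t" for t
    using that Gcd_dvd[of t "{t. pmf T t > 0}"] pmf_nonneg[of T t] unfolding d_def
    by (metis mem_Collect_eq order_le_less)
  have "d \<noteq> 0"
  proof
    assume "d = 0"
    obtain t where "pmf T t > 0" using set_pmf_not_empty[of T] by (metis all_not_in_conv pmf_positive)
    then show False using lattice[of t] pmf_T_0 \<open>d = 0\<close> by (cases t) auto
  qed
  obtain r where r: "prob (decided_renewal r 0) > 0"
    using ex_prob_decided_renewal_pos by blast
  define n where "n = 2 * r * d + 1"
  have "\<not> d dvd n"
    using \<open>d \<noteq> 1\<close> dvd_add_right_iff[of d "2 * r * d" 1] unfolding n_def by simp
  then have null: "prob {y \<in> \<Omega>. X 0 y \<and> X (int n) y} = 0"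
    by (intro prob_renewal_pair_lattice[OF lattice]) (auto simp: n_def)
  have "2 * r * 2 \<le> 2 * r * d" using \<open>d \<noteq> 0\<close> \<open>d \<noteq> 1\<close> by (intro mult_le_mono2) auto
  then have "n \<ge> 4 * r + 1" unfolding n_def by simp
  then have "{- int r .. int r} \<inter> {int n - int r .. int n + int r} = {}" by auto
  then have "prob (decided_renewal r 0 \<inter> decided_renewal r (int n))
      = prob (decided_renewal r 0) * prob (decided_renewal r (int n))"
    by (intro measure_coord_sigma_Int[OF prob_space_\<mu> decided_renewal_0_in_coord_sigma
        decided_renewal_in_coord_sigma])
  also have "\<dots> > 0" using r by (simp add: prob_decided_renewal[of r "int n"])
  finally have "prob (decided_renewal r 0 \<inter> decided_renewal r (int n)) > 0" .
  moreover have "prob (decided_renewal r 0 \<inter> decided_renewal r (int n))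
      \<le> prob {y \<in> \<Omega>. X 0 y \<and> X (int n) y}"
    by (intro finite_measure_mono) (auto simp: decided_renewal_def)
  ultimately show False using null by simp
qed

definition gap :: "int \<Rightarrow> nat \<Rightarrow> (int \<Rightarrow> 'a) set" where
  "gap a L = {y \<in> \<Omega>. \<forall>m\<in>{a..<a + int L}. \<not> X m y}"

definition undecided :: "nat \<Rightarrow> nat \<Rightarrow> int \<Rightarrow> (int \<Rightarrow> 'a) set" where
  "undecided r L a = \<Omega> - (\<Union>m\<in>{a..<a + int L}. decided_renewal r m)"

lemma sets_gap[measurable]: "gap a L \<in> sets M"
  unfolding gap_def by measurable

lemma prob_gap_shift: "prob (gap a L) = prob (gap 0 L)"
proof -
  have "{a..<a + int L} = (\<lambda>m. m + a) ` {0..<int L}"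
    using image_add_int_atLeastLessThan[of a "a + int L"] by simp
  then have "gap a L = {y \<in> \<Omega>. \<forall>m\<in>{0..<int L}. \<not> X (m + a) y}"
    unfolding gap_def by (simp only: ball_simps) blast
  moreover have "{y \<in> \<Omega>. \<forall>m\<in>{0..<int L}. \<not> X m y} \<in> sets M" by measurable
  ultimately show ?thesis
    using prob_shift_invariant[of "\<lambda>f. \<forall>m\<in>{0..<int L}. \<not> f m" a] by (simp add: gap_def)
qed

lemma prob_gap_tendsto_0: "(\<lambda>L. prob (gap 0 L)) \<longlonglongrightarrow> 0"
proof -
  have "(\<lambda>L. prob (gap 0 L)) \<longlonglongrightarrow> prob (\<Inter>L. gap 0 L)"
    by (rule finite_Lim_measure_decseq) (auto simp: decseq_def gap_def)
  moreover have "prob (\<Inter>L. gap 0 L) = prob {}"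
  proof (rule finite_measure_eq_AE)
    show "AE y in M. y \<in> (\<Inter>L. gap 0 L) \<longleftrightarrow> y \<in> {}"
      using AE_infinitely_many_ones
    proof eventually_elim
      case (elim y)
      then obtain n where "n \<ge> 0" "X n y" by (metis (mono_tags) empty_Collect_eq finite.emptyI)
      then have "y \<notin> gap 0 (nat n + 1)" by (auto simp: gap_def)
      then show ?case by blast
    qed
  qed auto
  ultimately show ?thesis by simp
qed

lemma prob_R_gt_tendsto_0: "(\<lambda>r. prob (\<Omega> - {y \<in> \<Omega>. R y \<le> enat r})) \<longlonglongrightarrow> 0"
proof -
  have "(\<lambda>r. prob {y \<in> \<Omega>. R y \<le> enat r}) \<longlonglongrightarrow> 1"
    using prob_R_le_tendsto[of \<Omega>] by (simp add: prob_space)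
  then have "(\<lambda>r. 1 - prob {y \<in> \<Omega>. R y \<le> enat r}) \<longlonglongrightarrow> 1 - 1"
    by (intro tendsto_diff tendsto_const)
  then show ?thesis by (simp add: prob_compl[OF sets_R_le])
qed

text \<open>A block without decided renewals either has no renewal at all, or the coding radius
  exceeds \<open>r\<close> at one of its \<open>L\<close> sites.\<close>

lemma prob_undecided_le:
  "prob (undecided r L a) \<le> prob (gap 0 L) + real L * prob (\<Omega> - {y \<in> \<Omega>. R y \<le> enat r})"
proof -
  define Q where "Q = \<Omega> - {y \<in> \<Omega>. R y \<le> enat r}"
  define S where "S m = shift_seq m -` Q \<inter> \<Omega>" for m
  have Q: "Q \<in> sets M" using sets_R_le unfolding Q_def by auto
  have sets_S: "S m \<in> sets M" for m
    using measurable_sets[OF measurable_shift_seq Q] unfolding S_def by simp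
  have "undecided r L a \<subseteq> gap a L \<union> (\<Union>m\<in>{a..<a + int L}. S m)"
    by (auto simp: undecided_def gap_def decided_renewal_def Q_def S_def shift_seq_in_space)
  then have "prob (undecided r L a) \<le> prob (gap a L) + prob (\<Union>m\<in>{a..<a + int L}. S m)"
    using sets_S by (intro order_trans[OF finite_measure_mono measure_Un_le]) auto
  also have "prob (\<Union>m\<in>{a..<a + int L}. S m) \<le> (\<Sum>m\<in>{a..<a + int L}. prob Q)"
    using sets_S by (intro order_trans[OF measure_UNION_le])
      (auto simp: S_def measure_shift_seq_vimage[OF prob_space_\<mu> Q])
  finally show ?thesis by (simp add: prob_gap_shift[of a L] Q_def)
qed

lemma undecided_in_coord_sigma:
  "undecided r L a \<in> sets (coord_sigma \<mu> {a - int r ..< a + int L + int r})"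
proof -
  have "decided_renewal r m \<in> sets (coord_sigma \<mu> {a - int r ..< a + int L + int r})"
    if "m \<in> {a..<a + int L}" for m
  proof -
    have "{m - int r .. m + int r} \<subseteq> {a - int r ..< a + int L + int r}" using that by auto
    then show ?thesis using decided_renewal_in_coord_sigma coord_sigma_mono by blast
  qed
  then have "(\<Union>m\<in>{a..<a + int L}. decided_renewal r m)
      \<in> sets (coord_sigma \<mu> {a - int r ..< a + int L + int r})"
    by (intro sets.finite_UN) auto
  from sets.compl_sets[OF this] show ?thesis
    by (simp add: undecided_def space_coord_sigma)
qed

lemma ex_prob_undecided_le_half: "\<exists>L r. L \<ge> 1 \<and> (\<forall>a. prob (undecided r L a) \<le> 1/2)"
proof -
  have "eventually (\<lambda>L. prob (gap 0 L) < 1/4) sequentially"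
    using prob_gap_tendsto_0 by (rule order_tendstoD) simp
  then obtain N where "\<And>L. L \<ge> N \<Longrightarrow> prob (gap 0 L) < 1/4"
    by (auto simp: eventually_sequentially)
  then have L: "prob (gap 0 (Suc N)) < 1/4" by simp
  have "(\<lambda>r. real (Suc N) * prob (\<Omega> - {y \<in> \<Omega>. R y \<le> enat r})) \<longlonglongrightarrow> 0"
    using tendsto_mult_right_zero[OF prob_R_gt_tendsto_0] .
  then have "eventually (\<lambda>r. real (Suc N) * prob (\<Omega> - {y \<in> \<Omega>. R y \<le> enat r}) < 1/4) sequentially"
    by (rule order_tendstoD) simp
  then obtain r where "real (Suc N) * prob (\<Omega> - {y \<in> \<Omega>. R y \<le> enat r}) < 1/4"
    by (auto simp: eventually_sequentially)
  with L have "prob (undecided r (Suc N) a) \<le> 1/2" for a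
    using prob_undecided_le[of r "Suc N" a] by linarith
  then have "Suc N \<ge> 1 \<and> (\<forall>a. prob (undecided r (Suc N) a) \<le> 1/2)" by simp
  then show ?thesis by blast
qed

text \<open>The blocks start at \<open>1 + jK\<close>; with \<open>K \<ge> L + 2r\<close> their coordinate windows are disjoint.\<close>

definition undecided_blocks :: "nat \<Rightarrow> nat \<Rightarrow> nat \<Rightarrow> nat \<Rightarrow> (int \<Rightarrow> 'a) set" where
  "undecided_blocks r L K m = {y \<in> \<Omega>. \<forall>j<m. y \<in> undecided r L (1 + int j * int K)}"

lemma undecided_blocks_bound:
  assumes half: "\<And>a. prob (undecided r L a) \<le> 1/2" and K: "L + 2 * r \<le> K"
  shows "undecided_blocks r L K m \<in> sets (coord_sigma \<mu> {..< 1 + int m * int K - int r})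
    \<and> prob (undecided_blocks r L K m) \<le> (1/2) ^ m"
proof (induction m)
  case 0
  have "undecided_blocks r L K 0 = space (coord_sigma \<mu> {..< 1 + int 0 * int K - int r})"
    by (simp add: undecided_blocks_def space_coord_sigma)
  then show ?case by simp
next
  case (Suc m)
  define b where "b = 1 + int m * int K"
  let ?W = "{..< 1 + int (Suc m) * int K - int r}"
  have split: "undecided_blocks r L K (Suc m) = undecided_blocks r L K m \<inter> undecided r L b"
    unfolding undecided_blocks_def b_def using less_Suc_eq by (auto simp: undecided_def)
  have "{..< 1 + int m * int K - int r} \<subseteq> ?W" "{b - int r ..< b + int L + int r} \<subseteq> ?W"
    using K by (auto simp: b_def algebra_simps)
  then have "undecided_blocks r L K (Suc m) \<in> sets (coord_sigma \<mu> ?W)"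
    unfolding split using Suc.IH undecided_in_coord_sigma coord_sigma_mono by blast
  moreover have "prob (undecided_blocks r L K (Suc m))
      = prob (undecided_blocks r L K m) * prob (undecided r L b)"
    unfolding split using Suc.IH
    by (intro measure_coord_sigma_Int[OF prob_space_\<mu> _ undecided_in_coord_sigma])
      (auto simp: b_def)
  moreover have "\<dots> \<le> (1/2) ^ m * (1/2)"
    using Suc.IH half[of b] by (intro mult_mono) auto
  ultimately show ?case by simp
qed

lemma gap_subset_undecided_blocks:
  assumes "L \<le> K"
  shows "gap 1 n \<subseteq> undecided_blocks r L K (n div K)"
proof -
  have "{1 + int j * int K ..< 1 + int j * int K + int L} \<subseteq> {1 ..< 1 + int n}"
    if "j < n div K" for j
  proof -
    have "Suc j * K \<le> n div K * K" using that by (intro mult_le_mono1) simp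
    also have "\<dots> \<le> n" by simp
    finally have "int j * int K + int L \<le> int n" using assms by (simp flip: of_nat_mult of_nat_add)
    then show ?thesis by auto
  qed
  then show ?thesis
    unfolding gap_def undecided_blocks_def undecided_def decided_renewal_def by fastforce
qed

lemma prob_gap_exponential: "\<exists>K > 0. \<forall>n. prob (gap 1 n) \<le> (1/2) ^ (n div K)"
proof -
  obtain L r where "L \<ge> 1" and half: "\<And>a. prob (undecided r L a) \<le> 1/2"
    using ex_prob_undecided_le_half by blast
  define K where "K = L + 2 * r"
  note blocks = undecided_blocks_bound[OF half, of K]
  have "prob (gap 1 n) \<le> (1/2) ^ (n div K)" for n
  proof -
    have "undecided_blocks r L K (n div K) \<in> sets M"
      using blocks sets_coord_sigma_subset unfolding K_def by blast
    then have "prob (gap 1 n) \<le> prob (undecided_blocks r L K (n div K))"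
      using gap_subset_undecided_blocks[of L K n r] by (intro finite_measure_mono) (auto simp: K_def)
    also have "\<dots> \<le> (1/2) ^ (n div K)" using blocks unfolding K_def by blast
    finally show ?thesis .
  qed
  moreover have "K > 0" using \<open>L \<ge> 1\<close> unfolding K_def by simp
  ultimately show ?thesis by blast
qed

text \<open>Palm formula: after a renewal at \<open>0\<close>, the next one comes at \<open>s \<ge> t\<close> only if
  \<open>1, \<dots>, t - 1\<close> is a gap.\<close>

lemma prob_T_atLeast_le_gap:
  assumes "t \<ge> 1"
  shows "measure_pmf.prob T {t..} \<le> prob (gap 1 (t - 1)) / intensity"
proof (rule measure_pmf_atLeast_le)
  fix N
  have "intensity * measure_pmf.prob T {t..N} = (\<Sum>s\<in>{t..N}. prob (first_return s))"
    using assms by (simp add: measure_measure_pmf_finite sum_distrib_left prob_first_return)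
  also have "\<dots> = prob (\<Union>s\<in>{t..N}. first_return s)"
    using assms disjoint_family_on_mono[OF _ disjoint_family_on_first_return, of "{t..N}"]
    by (intro finite_measure_finite_Union[symmetric]) auto
  also have "\<dots> \<le> prob (gap 1 (t - 1))"
    using assms by (intro finite_measure_mono) (force simp: first_return_def gap_def)+
  finally show "measure_pmf.prob T {t..N} \<le> prob (gap 1 (t - 1)) / intensity"
    using intensity_pos by (simp add: pos_le_divide_eq mult.commute)
qed

lemma exponential_tails_T: "exponential_tails T"
proof -
  obtain K where "K > 0" and K: "\<And>n. prob (gap 1 n) \<le> (1/2) ^ (n div K)"
    using prob_gap_exponential by blast
  have "measure_pmf.prob T {t..} \<le> 2 / intensity * exp (- (ln 2 / real K) * real t)"
    if "t \<ge> 1" for t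
  proof -
    have "measure_pmf.prob T {t..} \<le> (1/2) ^ ((t - 1) div K) / intensity"
      using prob_T_atLeast_le_gap[OF that] K[of "t - 1"] intensity_pos
      by (meson divide_right_mono less_imp_le order_trans)
    also have "\<dots> \<le> 2 * exp (- (ln 2 / real K) * real t) / intensity"
      using half_power_div_le_exp[OF \<open>K > 0\<close> that] intensity_pos by (intro divide_right_mono) auto
    finally show ?thesis by simp
  qed
  then show ?thesis
    unfolding exponential_tails_def using \<open>K > 0\<close> intensity_pos
    by (intro exI[of _ "2 / intensity"] exI[of _ "ln 2 / real K"]) auto
qed

end

theorem proposition3:
  fixes \<mu> :: "'a measure" and \<phi> :: "(int \<Rightarrow> 'a) \<Rightarrow> bool" and T :: "nat pmf"
  assumes "prob_space \<mu>"
    and "finitary_factor \<mu> \<phi>"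
    and "stationary_renewal (iid_space \<mu>) (factor_proc \<phi>) T"
  shows "non_lattice T \<and> exponential_tails T"
proof -
  obtain R where "finitary_renewal \<mu> \<phi> T R"
    using assms unfolding finitary_factor_def finitary_renewal_def by blast
  then show ?thesis
    using finitary_renewal.non_lattice_T finitary_renewal.exponential_tails_T by blast
qed

end
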